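(* Let $\mathcal A$ be a linear time-invariant algorithm with state-space realization $(A,B,C,D)$ and oracle map $\phi$. If $\mathcal A$ converges to a fixed point $(y^\star,u^\star,x^\star)$, then for every $n\ge1$ its repetition $\mathcal A^n$ converges to the fixed point $(y',u',x^\star)$, where $y'=(y^\star,\dots,y^\star)$ and $u'=(u^\star,\dots,u^\star)$ consist of $n$ stacked copies of $y^\star$ and $u^\star$ respectively.
   Context: The algorithm $\mathcal A$ generates $x^{k+1}=Ax^k+Bu^k$, $y^k=Cx^k+Du^k$, $u^k=\phi(y^k)$. A fixed point of $\mathcal A$ is a triple $(y^\star,u^\star,x^\star)$ with $x^\star=Ax^\star+Bu^\star$, $y^\star=Cx^\star+Du^\star$, $u^\star=\phi(y^\star)$. The repetition $\mathcal A^n$ performs $n$ iterations of $\mathcal A$ as one iteration; its state is that of $\mathcal A$ and its oracle arguments/outputs in one iteration are $(y^{nk},\dots,y^{nk+n-1})$ and $(u^{nk},\dots,u^{nk+n-1})$ stacked; its realization is state matrix $A^n$, input matrix $[A^{n-1}B,\dots,AB,B]$, output matrix with block rows $C,CA,\dots,CA^{n-1}$, and feedthrough matrix with $(r,s)$ block $CA^{r-s-1}B$ for $r>s$, $D$ for $r=s$, $0$ for $r<s$; a fixed point of it is defined analogously (with oracle map $\phi$ applied blockwise). *)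

theory Defs
  imports "Jordan_Normal_Form.Matrix"
begin

definition lti_traj ::
  "real mat \<Rightarrow> real mat \<Rightarrow> real mat \<Rightarrow> real mat \<Rightarrow> (real vec \<Rightarrow> real vec)
   \<Rightarrow> (nat \<Rightarrow> real vec) \<Rightarrow> (nat \<Rightarrow> real vec) \<Rightarrow> (nat \<Rightarrow> real vec) \<Rightarrow> bool" where
  "lti_traj A B C D phi x y u \<longleftrightarrow>
     (\<forall>k. x (Suc k) = A *\<^sub>v x k + B *\<^sub>v u k \<and>
          y k = C *\<^sub>v x k + D *\<^sub>v u k \<and>
          u k = phi (y k))"

definition lti_fixed ::
  "real mat \<Rightarrow> real mat \<Rightarrow> real mat \<Rightarrow> real mat \<Rightarrow> (real vec \<Rightarrow> real vec)
   \<Rightarrow> real vec \<Rightarrow> real vec \<Rightarrow> real vec \<Rightarrow> bool" where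
  "lti_fixed A B C D phi ys us xs \<longleftrightarrow>
     xs = A *\<^sub>v xs + B *\<^sub>v us \<and> ys = C *\<^sub>v xs + D *\<^sub>v us \<and> us = phi ys"

definition vec_lim :: "(nat \<Rightarrow> real vec) \<Rightarrow> real vec \<Rightarrow> bool" where
  "vec_lim X v \<longleftrightarrow> (\<forall>i < dim_vec v. (\<lambda>k. X k $ i) \<longlonglongrightarrow> v $ i)"

definition lti_converges ::
  "nat \<Rightarrow> real mat \<Rightarrow> real mat \<Rightarrow> real mat \<Rightarrow> real mat \<Rightarrow> (real vec \<Rightarrow> real vec)
   \<Rightarrow> real vec \<Rightarrow> real vec \<Rightarrow> real vec \<Rightarrow> bool" where
  "lti_converges nx A B C D phi ys us xs \<longleftrightarrow>
     lti_fixed A B C D phi ys us xs \<and>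
     (\<forall>x y u. x 0 \<in> carrier_vec nx \<and> lti_traj A B C D phi x y u \<longrightarrow>
        vec_lim y ys \<and> vec_lim u us \<and> vec_lim x xs)"

definition rep_A :: "nat \<Rightarrow> real mat \<Rightarrow> real mat" where
  "rep_A n A = A ^\<^sub>m n"

text \<open>Input matrix [A^(n-1) B, ..., A B, B].\<close>
definition rep_B :: "nat \<Rightarrow> real mat \<Rightarrow> real mat \<Rightarrow> real mat" where
  "rep_B n A B = mat (dim_row B) (n * dim_col B)
     (\<lambda>(i, j). (A ^\<^sub>m (n - 1 - j div dim_col B) * B) $$ (i, j mod dim_col B))"

text \<open>Output matrix with block rows C, C A, ..., C A^(n-1).\<close>
definition rep_C :: "nat \<Rightarrow> real mat \<Rightarrow> real mat \<Rightarrow> real mat" where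
  "rep_C n A C = mat (n * dim_row C) (dim_col C)
     (\<lambda>(i, j). (C * A ^\<^sub>m (i div dim_row C)) $$ (i mod dim_row C, j))"

text \<open>Feedthrough matrix: block (r,s) is C A^(r-s-1) B if r > s, D if r = s, 0 if r < s.\<close>
definition rep_D :: "nat \<Rightarrow> real mat \<Rightarrow> real mat \<Rightarrow> real mat \<Rightarrow> real mat \<Rightarrow> real mat" where
  "rep_D n A B C D = mat (n * dim_row D) (n * dim_col D)
     (\<lambda>(i, j). let r = i div dim_row D; s = j div dim_col D;
                  a = i mod dim_row D; b = j mod dim_col D in
       if s < r then (C * A ^\<^sub>m (r - s - 1) * B) $$ (a, b)
       else if r = s then D $$ (a, b) else 0)"

definition rep_phi :: "nat \<Rightarrow> nat \<Rightarrow> nat \<Rightarrow> (real vec \<Rightarrow> real vec) \<Rightarrow> real vec \<Rightarrow> real vec" where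
  "rep_phi n p m phi Y = vec (n * m)
     (\<lambda>i. phi (vec p (\<lambda>j. Y $ ((i div m) * p + j))) $ (i mod m))"

definition stack :: "nat \<Rightarrow> real vec \<Rightarrow> real vec" where
  "stack n v = vec (n * dim_vec v) (\<lambda>i. v $ (i mod dim_vec v))"

end

(* One iteration of the repetition, started in state X with stacked input U, is n iterations
   of A started in X and fed with the blocks of U: its new state is the state of A after n
   steps, and its r-th output block is the output of A at step r.  This is what the realization
   of the repetition encodes, via the variation-of-constants formula.  Hence every trajectory
   of the repetition unrolls into a trajectory of A, sampled at the multiples of n, and inherits
   its convergence; and the constant trajectory at the fixed point of A folds into a fixed
   point of the repetition. *)

theory Submission
  imports Defs
begin

definition block_vec :: "nat \<Rightarrow> 'a vec \<Rightarrow> nat \<Rightarrow> 'a vec" where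
  "block_vec m V s = vec m (\<lambda>b. V $ (s * m + b))"

lemma block_vec_carrier [simp]: "block_vec m V s \<in> carrier_vec m"
  and dim_block_vec [simp]: "dim_vec (block_vec m V s) = m"
  and index_block_vec [simp]: "b < m \<Longrightarrow> block_vec m V s $ b = V $ (s * m + b)"
  by (simp_all add: block_vec_def)

lemma block_index_less: "s < n \<Longrightarrow> b < m \<Longrightarrow> s * m + b < n * (m :: nat)"
proof -
  assume "s < n" "b < m"
  then have "s * m + b < s * m + m" by simp
  also have "\<dots> = Suc s * m" by simp
  also have "\<dots> \<le> n * m" using \<open>s < n\<close> by (intro mult_le_mono1) simp
  finally show ?thesis .
qed

lemma index_block_vec_div_mod: "i < n * m \<Longrightarrow> V $ i = block_vec m V (i div m) $ (i mod m)"
  by (cases "m = 0") simp_all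

lemma eq_vec_blocksI:
  assumes "V \<in> carrier_vec (n * m)" and "W \<in> carrier_vec (n * m)"
    and "\<And>s. s < n \<Longrightarrow> block_vec m V s = block_vec m W s"
  shows "V = W"
proof (rule eq_vecI)
  fix i assume "i < dim_vec W"
  then have i: "i < n * m" using assms(2) by simp
  then have "i div m < n" by (simp add: less_mult_imp_div_less)
  then show "V $ i = W $ i"
    using i assms(3) by (simp add: index_block_vec_div_mod[of i n m])
qed (use assms in simp)

lemma block_vec_stack: "s < n \<Longrightarrow> block_vec (dim_vec v) (stack n v) s = v"
  by (intro eq_vecI) (simp_all add: stack_def block_index_less)

lemma block_vec_rep_phi:
  assumes "\<forall>v \<in> carrier_vec ny. phi v \<in> carrier_vec nu" and "s < n"
  shows "block_vec nu (rep_phi n ny nu phi Y) s = phi (block_vec ny Y s)"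
proof -
  have "phi (block_vec ny Y s) \<in> carrier_vec nu" using assms(1) by simp
  then show ?thesis
    using assms(2) by (intro eq_vecI) (auto simp: rep_phi_def block_vec_def block_index_less)
qed

lemma sum_lessThan_mult_blocks:
  fixes n m :: nat
  shows "(\<Sum>j < n * m. f j) = (\<Sum>s < n. \<Sum>b < m. f (s * m + b))"
proof -
  have "(\<Sum>j\<in>{s * m..<s * m + m}. f j) = (\<Sum>b < m. f (s * m + b))" for s
    by (subst sum.atLeastLessThan_shift_0) (simp add: atLeast0LessThan comp_def)
  then show ?thesis by (simp add: sum.nat_group[symmetric])
qed

lemma index_mult_mat_vec_sum:
  "i < dim_row M \<Longrightarrow> dim_vec v = dim_col M \<Longrightarrow>
    (M *\<^sub>v v) $ i = (\<Sum>j < dim_col M. M $$ (i, j) * v $ j)"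
  unfolding index_mult_mat_vec scalar_prod_def by (auto simp: atLeast0LessThan intro: sum.cong)

lemma index_mult_mat_vec_blocks:
  assumes "i < dim_row M" and "dim_col M = n * m" and "dim_vec V = n * m"
  shows "(M *\<^sub>v V) $ i = (\<Sum>s < n. \<Sum>b < m. M $$ (i, s * m + b) * block_vec m V s $ b)"
  using assms
  by (subst index_mult_mat_vec_sum) (simp_all add: sum_lessThan_mult_blocks block_index_less)

primrec lti_state ::
  "'a::semiring_0 mat \<Rightarrow> 'a mat \<Rightarrow> 'a vec \<Rightarrow> (nat \<Rightarrow> 'a vec) \<Rightarrow> nat \<Rightarrow> 'a vec" where
  "lti_state A B x0 u 0 = x0"
| "lti_state A B x0 u (Suc t) = A *\<^sub>v lti_state A B x0 u t + B *\<^sub>v u t"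

lemma lti_state_add:
  "lti_state A B x0 u (m + r) = lti_state A B (lti_state A B x0 u m) (\<lambda>s. u (m + s)) r"
  by (induction r) simp_all

lemma lti_state_cong:
  "(\<And>s. s < r \<Longrightarrow> u s = v s) \<Longrightarrow> lti_state A B x0 u r = lti_state A B x0 v r"
  by (induction r) simp_all

lemma lti_state_fixed:
  assumes "x = A *\<^sub>v x + B *\<^sub>v u"
  shows "lti_state A B x (\<lambda>_. u) r = x"
  by (induction r) (simp_all add: assms[symmetric])

lemma lti_state_stack_fixed:
  assumes "x = A *\<^sub>v x + B *\<^sub>v u" and "u \<in> carrier_vec nu" and "r \<le> n"
  shows "lti_state A B x (block_vec nu (stack n u)) r = x"
proof -
  have "lti_state A B x (block_vec nu (stack n u)) r = lti_state A B x (\<lambda>_. u) r"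
    using assms(2,3) block_vec_stack[of _ n u] by (intro lti_state_cong) simp
  then show ?thesis using lti_state_fixed[OF assms(1)] by simp
qed

lemma lti_state_carrier:
  assumes A: "A \<in> carrier_mat nx nx" and B: "B \<in> carrier_mat nx nu" and "x0 \<in> carrier_vec nx"
  shows "lti_state A B x0 u r \<in> carrier_vec nx"
proof (induction r)
  case (Suc r)
  have "B *\<^sub>v u r \<in> carrier_vec nx" using B by (intro carrier_vecI) simp
  then show ?case by (simp add: add_carrier_vec mult_mat_vec_carrier[OF A Suc.IH])
qed (use assms in simp)

lemma lti_state_unroll:
  assumes step: "\<And>k. X (Suc k) = lti_state A B (X k) (v k) n" and s: "s \<le> n"
  shows "lti_state A B (X 0) (\<lambda>t. v (t div n) (t mod n)) (n * k + s) =
    lti_state A B (X k) (v k) s"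
proof -
  let ?u = "\<lambda>t. v (t div n) (t mod n)"
  have shift: "lti_state A B x (\<lambda>r. ?u (n * k + r)) s = lti_state A B x (v k) s"
    if "s \<le> n" for x k s
    using that by (intro lti_state_cong) simp
  have sample: "lti_state A B (X 0) ?u (n * k) = X k" for k
  proof (induction k)
    case (Suc k)
    have "n * Suc k = n * k + n" by simp
    then have "lti_state A B (X 0) ?u (n * Suc k) =
        lti_state A B (lti_state A B (X 0) ?u (n * k)) (\<lambda>r. ?u (n * k + r)) n"
      by (simp only: lti_state_add)
    also have "\<dots> = X (Suc k)"
      using Suc.IH shift[of n] step by simp
    finally show ?case .
  qed simp
  show ?thesis
    using sample shift s by (simp add: lti_state_add)
qed

(* Variation of constants, observed through an arbitrary matrix M so that it yields both the
   state (M = 1) and the output (M = C). *)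
lemma index_mult_mat_vec_lti_state:
  fixes A B M :: "'a::semiring_1 mat"
  assumes A: "A \<in> carrier_mat nx nx" and B: "B \<in> carrier_mat nx nu" and M: "M \<in> carrier_mat k nx"
    and x0: "x0 \<in> carrier_vec nx" and u: "\<And>s. u s \<in> carrier_vec nu" and a: "a < k"
  shows "(M *\<^sub>v lti_state A B x0 u r) $ a =
    ((M * A ^\<^sub>m r) *\<^sub>v x0) $ a + (\<Sum>s < r. ((M * A ^\<^sub>m (r - s - 1) * B) *\<^sub>v u s) $ a)"
  using x0 u
proof (induction r arbitrary: x0 u)
  case 0
  have "M * A ^\<^sub>m 0 = M" using M A by simp
  then show ?case by simp
next
  case (Suc r)
  let ?x1 = "A *\<^sub>v x0 + B *\<^sub>v u 0"
  have x1: "?x1 \<in> carrier_vec nx" using A B Suc.prems by auto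
  have MAr: "M * A ^\<^sub>m r \<in> carrier_mat k nx" using M A by simp
  have "(M * A ^\<^sub>m r) *\<^sub>v ?x1 =
      (M * A ^\<^sub>m r) *\<^sub>v (A *\<^sub>v x0) + (M * A ^\<^sub>m r) *\<^sub>v (B *\<^sub>v u 0)"
    using MAr A B Suc.prems by (intro mult_add_distrib_mat_vec) auto
  also have "\<dots> = (M * A ^\<^sub>m r * A) *\<^sub>v x0 + (M * A ^\<^sub>m r * B) *\<^sub>v u 0"
    using MAr A B Suc.prems by (simp add: assoc_mult_mat_vec)
  also have "M * A ^\<^sub>m r * A = M * A ^\<^sub>m Suc r"
    using M A by (simp add: assoc_mult_mat[of M k nx _ nx _ nx])
  finally have step:
    "(M * A ^\<^sub>m r) *\<^sub>v ?x1 = (M * A ^\<^sub>m Suc r) *\<^sub>v x0 + (M * A ^\<^sub>m r * B) *\<^sub>v u 0" .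
  have "lti_state A B x0 u (Suc r) = lti_state A B ?x1 (\<lambda>s. u (Suc s)) r"
    using lti_state_add[of A B x0 u 1 r] by simp
  then have "(M *\<^sub>v lti_state A B x0 u (Suc r)) $ a =
      ((M * A ^\<^sub>m r) *\<^sub>v ?x1) $ a + (\<Sum>s < r. ((M * A ^\<^sub>m (r - s - 1) * B) *\<^sub>v u (Suc s)) $ a)"
    using Suc.IH[OF x1] Suc.prems(2) by simp
  also have "\<dots> = ((M * A ^\<^sub>m Suc r) *\<^sub>v x0) $ a +
      (\<Sum>s < Suc r. ((M * A ^\<^sub>m (Suc r - s - 1) * B) *\<^sub>v u s) $ a)"
    by (subst sum.lessThan_Suc_shift) (use M B a in \<open>simp add: step add.assoc\<close>)
  finally show ?case .
qed

lemma dim_rep_B [simp]: "dim_row (rep_B n A B) = dim_row B" "dim_col (rep_B n A B) = n * dim_col B"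
  by (simp_all add: rep_B_def)

lemma dim_rep_C [simp]: "dim_row (rep_C n A C) = n * dim_row C" "dim_col (rep_C n A C) = dim_col C"
  by (simp_all add: rep_C_def)

lemma dim_rep_D [simp]:
  "dim_row (rep_D n A B C D) = n * dim_row D" "dim_col (rep_D n A B C D) = n * dim_col D"
  by (simp_all add: rep_D_def)

lemma dim_rep_phi [simp]: "dim_vec (rep_phi n p m phi Y) = n * m"
  by (simp add: rep_phi_def)

lemma dim_stack [simp]: "dim_vec (stack n v) = n * dim_vec v"
  by (simp add: stack_def)

lemma index_rep_B:
  "B \<in> carrier_mat nx nu \<Longrightarrow> i < nx \<Longrightarrow> s < n \<Longrightarrow> b < nu \<Longrightarrow>
    rep_B n A B $$ (i, s * nu + b) = (A ^\<^sub>m (n - s - 1) * B) $$ (i, b)"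
  by (simp add: rep_B_def block_index_less)

lemma index_rep_C:
  "C \<in> carrier_mat ny nx \<Longrightarrow> a < ny \<Longrightarrow> r < n \<Longrightarrow> j < nx \<Longrightarrow>
    rep_C n A C $$ (r * ny + a, j) = (C * A ^\<^sub>m r) $$ (a, j)"
  by (simp add: rep_C_def block_index_less)

lemma index_rep_D:
  "D \<in> carrier_mat ny nu \<Longrightarrow> a < ny \<Longrightarrow> b < nu \<Longrightarrow> r < n \<Longrightarrow> s < n \<Longrightarrow>
    rep_D n A B C D $$ (r * ny + a, s * nu + b) =
      (if s < r then (C * A ^\<^sub>m (r - s - 1) * B) $$ (a, b) else if r = s then D $$ (a, b) else 0)"
  by (simp add: rep_D_def block_index_less Let_def)

lemma index_mult_rep_B:
  fixes A B :: "real mat"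
  assumes A: "A \<in> carrier_mat nx nx" and B: "B \<in> carrier_mat nx nu"
    and U: "U \<in> carrier_vec (n * nu)" and i: "i < nx"
  shows "(rep_B n A B *\<^sub>v U) $ i = (\<Sum>s < n. ((A ^\<^sub>m (n - s - 1) * B) *\<^sub>v block_vec nu U s) $ i)"
proof -
  have block_term: "((A ^\<^sub>m (n - s - 1) * B) *\<^sub>v block_vec nu U s) $ i =
      (\<Sum>b < nu. rep_B n A B $$ (i, s * nu + b) * block_vec nu U s $ b)" if "s < n" for s
    using i A B that by (subst index_mult_mat_vec_sum) (simp_all add: index_rep_B)
  have "(rep_B n A B *\<^sub>v U) $ i =
      (\<Sum>s < n. \<Sum>b < nu. rep_B n A B $$ (i, s * nu + b) * block_vec nu U s $ b)"
    using i B U by (intro index_mult_mat_vec_blocks) simp_all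
  also have "\<dots> = (\<Sum>s < n. ((A ^\<^sub>m (n - s - 1) * B) *\<^sub>v block_vec nu U s) $ i)"
    by (rule sum.cong[OF refl], rule block_term[symmetric]) simp
  finally show ?thesis .
qed

lemma index_mult_rep_C:
  fixes A C :: "real mat"
  assumes "A \<in> carrier_mat nx nx" and "C \<in> carrier_mat ny nx"
    and "X \<in> carrier_vec nx" and "r < n" and "a < ny"
  shows "(rep_C n A C *\<^sub>v X) $ (r * ny + a) = ((C * A ^\<^sub>m r) *\<^sub>v X) $ a"
  using assms block_index_less[of r n a ny]
  by (simp add: index_mult_mat_vec_sum index_rep_C del: index_mult_mat_vec)

lemma index_mult_rep_D:
  fixes A B C D :: "real mat"
  assumes A: "A \<in> carrier_mat nx nx" and B: "B \<in> carrier_mat nx nu"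
    and C: "C \<in> carrier_mat ny nx" and D: "D \<in> carrier_mat ny nu"
    and U: "U \<in> carrier_vec (n * nu)" and r: "r < n" and a: "a < ny"
  shows "(rep_D n A B C D *\<^sub>v U) $ (r * ny + a) =
    (\<Sum>s < r. ((C * A ^\<^sub>m (r - s - 1) * B) *\<^sub>v block_vec nu U s) $ a) + (D *\<^sub>v block_vec nu U r) $ a"
proof -
  have i: "r * ny + a < n * ny" using r a by (rule block_index_less)
  have row_sum: "(N *\<^sub>v w) $ a = (\<Sum>b < nu. N $$ (a, b) * w $ b)"
    if "N \<in> carrier_mat ny nu" and "w \<in> carrier_vec nu" for N w
    using that a by (subst index_mult_mat_vec_sum) auto
  define g where "g s = (if s < r then ((C * A ^\<^sub>m (r - s - 1) * B) *\<^sub>v block_vec nu U s) $ a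
      else if r = s then (D *\<^sub>v block_vec nu U s) $ a else 0)" for s
  have "(rep_D n A B C D *\<^sub>v U) $ (r * ny + a) =
      (\<Sum>s < n. \<Sum>b < nu. rep_D n A B C D $$ (r * ny + a, s * nu + b) * block_vec nu U s $ b)"
    using i D U by (intro index_mult_mat_vec_blocks) simp_all
  also have "\<dots> = (\<Sum>s < n. g s)"
  proof (rule sum.cong[OF refl])
    fix s assume "s \<in> {..<n}"
    then have "rep_D n A B C D $$ (r * ny + a, s * nu + b) =
      (if s < r then (C * A ^\<^sub>m (r - s - 1) * B) $$ (a, b) else if r = s then D $$ (a, b) else 0)"
      if "b < nu" for b
      using D a r that by (simp add: index_rep_D)
    moreover have "C * A ^\<^sub>m (r - s - 1) * B \<in> carrier_mat ny nu"
      using mult_carrier_mat[OF mult_carrier_mat[OF C pow_carrier_mat[OF A]] B] .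
    ultimately show "(\<Sum>b < nu. rep_D n A B C D $$ (r * ny + a, s * nu + b) * block_vec nu U s $ b) =
        g s"
      using D by (simp add: g_def row_sum)
  qed
  also have "\<dots> = (\<Sum>s < Suc r. g s)"
    using r by (intro sum.mono_neutral_right) (auto simp: g_def)
  also have "\<dots> = (\<Sum>s < r. ((C * A ^\<^sub>m (r - s - 1) * B) *\<^sub>v block_vec nu U s) $ a) +
      (D *\<^sub>v block_vec nu U r) $ a"
    by (simp add: g_def)
  finally show ?thesis .
qed

lemma rep_next_state_eq_lti_state:
  fixes A B :: "real mat"
  assumes A: "A \<in> carrier_mat nx nx" and B: "B \<in> carrier_mat nx nu"
    and X: "X \<in> carrier_vec nx" and U: "U \<in> carrier_vec (n * nu)"
  shows "rep_A n A *\<^sub>v X + rep_B n A B *\<^sub>v U = lti_state A B X (block_vec nu U) n"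
proof (rule eq_vecI)
  have state: "lti_state A B X (block_vec nu U) n \<in> carrier_vec nx"
    using A B X by (rule lti_state_carrier)
  then show "dim_vec (rep_A n A *\<^sub>v X + rep_B n A B *\<^sub>v U) =
      dim_vec (lti_state A B X (block_vec nu U) n)"
    using B by (simp add: rep_A_def)
  fix i assume "i < dim_vec (lti_state A B X (block_vec nu U) n)"
  then have i: "i < nx" using state by simp
  have "(rep_A n A *\<^sub>v X + rep_B n A B *\<^sub>v U) $ i =
      ((1\<^sub>m nx * A ^\<^sub>m n) *\<^sub>v X) $ i +
      (\<Sum>s < n. ((1\<^sub>m nx * A ^\<^sub>m (n - s - 1) * B) *\<^sub>v block_vec nu U s) $ i)"
    using i A B by (simp add: rep_A_def index_mult_rep_B[OF A B U i] del: index_mult_mat_vec)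
  also have "\<dots> = (1\<^sub>m nx *\<^sub>v lti_state A B X (block_vec nu U) n) $ i"
    by (rule index_mult_mat_vec_lti_state[OF A B one_carrier_mat X block_vec_carrier i, symmetric])
  also have "\<dots> = lti_state A B X (block_vec nu U) n $ i"
    using state by simp
  finally show "(rep_A n A *\<^sub>v X + rep_B n A B *\<^sub>v U) $ i = lti_state A B X (block_vec nu U) n $ i" .
qed

lemma block_vec_rep_output:
  fixes A B C D :: "real mat"
  assumes A: "A \<in> carrier_mat nx nx" and B: "B \<in> carrier_mat nx nu"
    and C: "C \<in> carrier_mat ny nx" and D: "D \<in> carrier_mat ny nu"
    and X: "X \<in> carrier_vec nx" and U: "U \<in> carrier_vec (n * nu)" and r: "r < n"
  shows "block_vec ny (rep_C n A C *\<^sub>v X + rep_D n A B C D *\<^sub>v U) r =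
    C *\<^sub>v lti_state A B X (block_vec nu U) r + D *\<^sub>v block_vec nu U r"
proof (rule eq_vecI)
  show "dim_vec (block_vec ny (rep_C n A C *\<^sub>v X + rep_D n A B C D *\<^sub>v U) r) =
      dim_vec (C *\<^sub>v lti_state A B X (block_vec nu U) r + D *\<^sub>v block_vec nu U r)"
    using D by simp
  fix a assume "a < dim_vec (C *\<^sub>v lti_state A B X (block_vec nu U) r + D *\<^sub>v block_vec nu U r)"
  then have a: "a < ny" using D by simp
  have "block_vec ny (rep_C n A C *\<^sub>v X + rep_D n A B C D *\<^sub>v U) r $ a =
      (rep_C n A C *\<^sub>v X) $ (r * ny + a) + (rep_D n A B C D *\<^sub>v U) $ (r * ny + a)"
    using a block_index_less[OF r a] C D by simp
  also have "\<dots> = ((C * A ^\<^sub>m r) *\<^sub>v X) $ a +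
      (\<Sum>s < r. ((C * A ^\<^sub>m (r - s - 1) * B) *\<^sub>v block_vec nu U s) $ a) +
      (D *\<^sub>v block_vec nu U r) $ a"
    by (simp add: index_mult_rep_C[OF A C X r a] index_mult_rep_D[OF A B C D U r a] add.assoc)
  also have "\<dots> = (C *\<^sub>v lti_state A B X (block_vec nu U) r + D *\<^sub>v block_vec nu U r) $ a"
    using a C D by (simp add: index_mult_mat_vec_lti_state[OF A B C X block_vec_carrier a])
  finally show "block_vec ny (rep_C n A C *\<^sub>v X + rep_D n A B C D *\<^sub>v U) r $ a =
      (C *\<^sub>v lti_state A B X (block_vec nu U) r + D *\<^sub>v block_vec nu U r) $ a" .
qed

lemma lti_fixed_repetition:
  fixes A B C D :: "real mat"
  assumes A: "A \<in> carrier_mat nx nx" and B: "B \<in> carrier_mat nx nu"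
    and C: "C \<in> carrier_mat ny nx" and D: "D \<in> carrier_mat ny nu"
    and phi: "\<forall>v \<in> carrier_vec ny. phi v \<in> carrier_vec nu"
    and ys: "ys \<in> carrier_vec ny" and us: "us \<in> carrier_vec nu" and xs: "xs \<in> carrier_vec nx"
    and fixed: "lti_fixed A B C D phi ys us xs"
  shows "lti_fixed (rep_A n A) (rep_B n A B) (rep_C n A C) (rep_D n A B C D)
    (rep_phi n ny nu phi) (stack n ys) (stack n us) xs"
proof -
  have x_eq: "xs = A *\<^sub>v xs + B *\<^sub>v us" and y_eq: "ys = C *\<^sub>v xs + D *\<^sub>v us"
    and u_eq: "us = phi ys"
    using fixed unfolding lti_fixed_def by blast+
  have U: "stack n us \<in> carrier_vec (n * nu)" and Y: "stack n ys \<in> carrier_vec (n * ny)"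
    using us ys by (auto intro!: carrier_vecI)
  have blocks_us: "block_vec nu (stack n us) s = us"
    and blocks_ys: "block_vec ny (stack n ys) s = ys" if "s < n" for s
    using block_vec_stack[OF that, of us] block_vec_stack[OF that, of ys] us ys by simp_all
  have states: "lti_state A B xs (block_vec nu (stack n us)) r = xs" if "r \<le> n" for r
    using x_eq us that by (rule lti_state_stack_fixed)
  show ?thesis
    unfolding lti_fixed_def
  proof (intro conjI)
    show "xs = rep_A n A *\<^sub>v xs + rep_B n A B *\<^sub>v stack n us"
      using rep_next_state_eq_lti_state[OF A B xs U] states[of n] by simp
    show "stack n ys = rep_C n A C *\<^sub>v xs + rep_D n A B C D *\<^sub>v stack n us"
    proof (rule eq_vec_blocksI[OF Y])
      show "rep_C n A C *\<^sub>v xs + rep_D n A B C D *\<^sub>v stack n us \<in> carrier_vec (n * ny)"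
        using C D by (intro carrier_vecI) simp
      fix s assume s: "s < n"
      have "block_vec ny (rep_C n A C *\<^sub>v xs + rep_D n A B C D *\<^sub>v stack n us) s =
          C *\<^sub>v xs + D *\<^sub>v us"
        using block_vec_rep_output[OF A B C D xs U s] s by (simp add: blocks_us states)
      then show "block_vec ny (stack n ys) s =
          block_vec ny (rep_C n A C *\<^sub>v xs + rep_D n A B C D *\<^sub>v stack n us) s"
        unfolding blocks_ys[OF s] by (simp only: y_eq[symmetric])
    qed
    show "stack n us = rep_phi n ny nu phi (stack n ys)"
    proof (rule eq_vec_blocksI[OF U])
      show "rep_phi n ny nu phi (stack n ys) \<in> carrier_vec (n * nu)"
        by (intro carrier_vecI) simp
      fix s assume s: "s < n"
      show "block_vec nu (stack n us) s = block_vec nu (rep_phi n ny nu phi (stack n ys)) s"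
        unfolding blocks_us[OF s] block_vec_rep_phi[OF phi s] blocks_ys[OF s] by (rule u_eq)
    qed
  qed
qed

lemma lti_traj_repetition_unroll:
  fixes A B C D :: "real mat"
  assumes A: "A \<in> carrier_mat nx nx" and B: "B \<in> carrier_mat nx nu"
    and C: "C \<in> carrier_mat ny nx" and D: "D \<in> carrier_mat ny nu"
    and phi: "\<forall>v \<in> carrier_vec ny. phi v \<in> carrier_vec nu" and n: "n > 0"
    and X0: "X 0 \<in> carrier_vec nx"
    and traj: "lti_traj (rep_A n A) (rep_B n A B) (rep_C n A C) (rep_D n A B C D)
      (rep_phi n ny nu phi) X Y U"
  obtains x y u where "lti_traj A B C D phi x y u" and "\<And>k. X k = x (n * k)"
    and "\<And>k s. s < n \<Longrightarrow> block_vec ny (Y k) s = y (n * k + s)"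
    and "\<And>k s. s < n \<Longrightarrow> block_vec nu (U k) s = u (n * k + s)"
proof -
  have X_Suc: "X (Suc k) = rep_A n A *\<^sub>v X k + rep_B n A B *\<^sub>v U k"
    and Y_eq: "Y k = rep_C n A C *\<^sub>v X k + rep_D n A B C D *\<^sub>v U k"
    and U_eq: "U k = rep_phi n ny nu phi (Y k)" for k
    using traj unfolding lti_traj_def by blast+
  have U: "U k \<in> carrier_vec (n * nu)" for k
    unfolding U_eq by (intro carrier_vecI) simp
  have X: "X k \<in> carrier_vec nx" for k
  proof (induction k)
    case (Suc k)
    show ?case
      unfolding X_Suc rep_next_state_eq_lti_state[OF A B Suc.IH U]
      using A B Suc.IH by (rule lti_state_carrier)
  qed (rule X0)
  have X_step: "X (Suc k) = lti_state A B (X k) (block_vec nu (U k)) n" for k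
    unfolding X_Suc by (rule rep_next_state_eq_lti_state[OF A B X U])
  define u where "u t = block_vec nu (U (t div n)) (t mod n)" for t
  define x where "x = lti_state A B (X 0) u"
  define y where "y t = C *\<^sub>v x t + D *\<^sub>v u t" for t
  have u_block: "u (n * k + s) = block_vec nu (U k) s" if "s < n" for k s
    using that by (simp add: u_def)
  have x_block: "x (n * k + s) = lti_state A B (X k) (block_vec nu (U k)) s" if "s \<le> n" for k s
    unfolding x_def u_def using X_step that by (rule lti_state_unroll)
  have X_sample: "X k = x (n * k)" for k
    using x_block[of 0 k] by simp
  have y_block: "block_vec ny (Y k) s = y (n * k + s)" if "s < n" for k s
    unfolding Y_eq block_vec_rep_output[OF A B C D X U that] y_def
    using that by (simp add: x_block u_block)
  have traj_unrolled: "lti_traj A B C D phi x y u"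
    unfolding lti_traj_def
  proof (intro allI conjI)
    fix t
    show "x (Suc t) = A *\<^sub>v x t + B *\<^sub>v u t" by (simp add: x_def)
    show "y t = C *\<^sub>v x t + D *\<^sub>v u t" by (simp add: y_def)
    have t: "t = n * (t div n) + t mod n" and s: "t mod n < n" using n by simp_all
    have "u t = block_vec nu (rep_phi n ny nu phi (Y (t div n))) (t mod n)"
      by (simp add: u_def U_eq)
    also have "\<dots> = phi (y t)"
      unfolding block_vec_rep_phi[OF phi s] y_block[OF s] t[symmetric] ..
    finally show "u t = phi (y t)" .
  qed
  show ?thesis using traj_unrolled X_sample y_block u_block[symmetric] by (rule that)
qed

lemma vec_lim_subseq: "vec_lim x v \<Longrightarrow> strict_mono \<sigma> \<Longrightarrow> vec_lim (x \<circ> \<sigma>) v"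
  unfolding vec_lim_def using LIMSEQ_subseq_LIMSEQ by (fastforce simp: comp_def)

lemma vec_lim_stack:
  assumes lim: "vec_lim z v"
    and blocks: "\<And>k s. s < n \<Longrightarrow> block_vec (dim_vec v) (Z k) s = z (n * k + s)"
  shows "vec_lim Z (stack n v)"
  unfolding vec_lim_def
proof (intro allI impI)
  let ?m = "dim_vec v"
  fix i assume "i < dim_vec (stack n v)"
  then have i: "i < n * ?m" by simp
  have "?m > 0" using i by (metis mult_0_right not_less0 neq0_conv)
  with i have s: "i div ?m < n" and b: "i mod ?m < ?m"
    by (simp_all add: less_mult_imp_div_less)
  have "strict_mono (\<lambda>k. n * k + i div ?m)"
    using s by (intro strict_monoI) simp
  with lim have "vec_lim (z \<circ> (\<lambda>k. n * k + i div ?m)) v" by (rule vec_lim_subseq)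
  then have "(\<lambda>k. z (n * k + i div ?m) $ (i mod ?m)) \<longlonglongrightarrow> v $ (i mod ?m)"
    using b unfolding vec_lim_def by simp
  moreover have "Z k $ i = z (n * k + i div ?m) $ (i mod ?m)" for k
    by (simp only: index_block_vec_div_mod[OF i, of "Z k"] blocks[OF s])
  moreover have "stack n v $ i = v $ (i mod ?m)" using i by (simp add: stack_def)
  ultimately show "(\<lambda>k. Z k $ i) \<longlonglongrightarrow> stack n v $ i" by simp
qed

lemma lti_traj_repetition_converges:
  fixes A B C D :: "real mat"
  assumes A: "A \<in> carrier_mat nx nx" and B: "B \<in> carrier_mat nx nu"
    and C: "C \<in> carrier_mat ny nx" and D: "D \<in> carrier_mat ny nu"
    and phi: "\<forall>v \<in> carrier_vec ny. phi v \<in> carrier_vec nu" and n: "n > 0"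
    and ys: "ys \<in> carrier_vec ny" and us: "us \<in> carrier_vec nu"
    and conv: "\<forall>x y u. x 0 \<in> carrier_vec nx \<and> lti_traj A B C D phi x y u \<longrightarrow>
      vec_lim y ys \<and> vec_lim u us \<and> vec_lim x xs"
    and X0: "X 0 \<in> carrier_vec nx"
    and traj_rep: "lti_traj (rep_A n A) (rep_B n A B) (rep_C n A C) (rep_D n A B C D)
      (rep_phi n ny nu phi) X Y U"
  shows "vec_lim Y (stack n ys) \<and> vec_lim U (stack n us) \<and> vec_lim X xs"
proof -
  obtain x y u
    where traj: "lti_traj A B C D phi x y u" and X: "\<And>k. X k = x (n * k)"
      and Y: "\<And>k s. s < n \<Longrightarrow> block_vec ny (Y k) s = y (n * k + s)"
      and U: "\<And>k s. s < n \<Longrightarrow> block_vec nu (U k) s = u (n * k + s)"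
    using lti_traj_repetition_unroll[OF A B C D phi n X0 traj_rep] by blast
  have "x 0 \<in> carrier_vec nx" using X[of 0] X0 by simp
  with traj have y: "vec_lim y ys" and u: "vec_lim u us" and x: "vec_lim x xs"
    using conv by blast+
  have "vec_lim Y (stack n ys)" by (rule vec_lim_stack[OF y]) (use ys Y in simp)
  moreover have "vec_lim U (stack n us)" by (rule vec_lim_stack[OF u]) (use us U in simp)
  moreover have "vec_lim X xs"
  proof -
    have "strict_mono (\<lambda>k. n * k)" using n by (intro strict_monoI) simp
    with x have "vec_lim (x \<circ> (\<lambda>k. n * k)) xs" by (rule vec_lim_subseq)
    moreover have "X = x \<circ> (\<lambda>k. n * k)" using X by auto
    ultimately show ?thesis by simp
  qed
  ultimately show ?thesis by blast
qed

theorem proposition7p3: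
  fixes A B C D :: "real mat" and phi :: "real vec \<Rightarrow> real vec"
    and nx nu ny n :: nat and ys us xs :: "real vec"
  assumes "A \<in> carrier_mat nx nx" and "B \<in> carrier_mat nx nu"
    and "C \<in> carrier_mat ny nx" and "D \<in> carrier_mat ny nu"
    and "\<forall>v \<in> carrier_vec ny. phi v \<in> carrier_vec nu"
    and "ys \<in> carrier_vec ny" and "us \<in> carrier_vec nu" and "xs \<in> carrier_vec nx"
    and "lti_converges nx A B C D phi ys us xs"
    and "n \<ge> 1"
  shows "lti_converges nx (rep_A n A) (rep_B n A B) (rep_C n A C) (rep_D n A B C D)
           (rep_phi n ny nu phi) (stack n ys) (stack n us) xs"
proof -
  have fixed: "lti_fixed A B C D phi ys us xs"
    and conv: "\<forall>x y u. x 0 \<in> carrier_vec nx \<and> lti_traj A B C D phi x y u \<longrightarrow>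
      vec_lim y ys \<and> vec_lim u us \<and> vec_lim x xs"
    using assms(9) unfolding lti_converges_def by blast+
  have "n > 0" using assms(10) by simp
  then show ?thesis
    unfolding lti_converges_def
    using lti_fixed_repetition[OF assms(1-8) fixed]
      lti_traj_repetition_converges[OF assms(1-5) _ assms(6,7) conv]
    by blast
qed

end
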